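(* Consider the all-batch change model described in the context, and suppose that for every batch $e\in\{1,\dots,E\}$ the post-change parameter set $\Lambda^{e}=\{\lambda:|\lambda-\theta^{(e)}|\ge\epsilon\}$ is finite (where $\epsilon>0$ is fixed). Then the stopping time $\tau_a=\inf\{n\ge1:W_n>A\}$ is asymptotically efficient. That is, there exist thresholds $A=A_\beta=O(\log\beta)$ such that, as $\beta\to\infty$, \[ \mathbb{E}_\infty[\tau_a]\ge\beta(1+o(1)), \] and there is a constant $C>0$ with \[ \mathbb{E}_1[\tau_a]\le C\log\beta\,(1+o(1)), \] whenever the change affects all batches with post-change parameters $\lambda^{(e)}\in\Lambda^e$, $e=1,\dots,E$.
   Context: Let $\{p(\cdot;\theta):\theta\in\Theta\subseteq\mathbb{R}\}$ be a parametric family of probability densities with respect to a common dominating measure. Assume that for any two distinct parameters the Kullback–Leibler divergence between the corresponding densities is finite and strictly positive. **Period and batches.** Fix a period $T\in\mathbb{N}$ and integers $0=N_0<N_1<\dots<N_E=T$. The batches are $B_e=\{N_{e-1}+1,\dots,N_e\}$ for $e=1,\dots,E$, which partition $\{1,\dots,T\}$. For $k\in\mathbb{N}$, the batch of $k$, written $b(k)$, is the unique $j$ with $r(k)\in B_j$. Here $r(k)\in\{1,\dots,T\}$ is the residue of $k$ modulo $T$, with residue $0$ identified with $T$. There are baseline (pre-change) parameters $\theta^{(1)},\dots,\theta^{(E)}$. **Pre-change model.** Under the no-change measure $\mathbb{P}_\infty$, the observations $Y_1,Y_2,\dots$ are independent with $Y_k\sim p(\cdot;\theta^{(b(k))})$.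 **All-batch change model.** For a change time $\gamma\in\mathbb{N}$ and post-change parameters $\lambda^{(1)},\dots,\lambda^{(E)}$ with $\lambda^{(e)}\ne\theta^{(e)}$, the measure $\mathbb{P}_\gamma$ makes the $Y_k$ independent with the following laws: - $Y_k\sim p(\cdot;\theta^{(b(k))})$ for $k<\gamma$; - $Y_k\sim p(\cdot;\lambda^{(b(k))})$ for $k\ge\gamma$. $\mathbb{E}_\gamma$ denotes expectation under $\mathbb{P}_\gamma$. **Statistic and stopping rule.** For $\epsilon>0$ let $\Lambda^e=\{\lambda:|\lambda-\theta^{(e)}|\ge\epsilon\}$. Define \[ W_n=\max_{1\le k\le n}\ \sup_{\lambda^{(e)}\in\Lambda^{e},\ e=1,\dots,E}\ \sum_{i=k}^{n}\log\frac{p(Y_i;\lambda^{(b(i))})}{p(Y_i;\theta^{(b(i))})}, \] and $\tau_a=\inf\{n\ge1:W_n>A\}$ for a threshold $A>0$. **Asymptotic efficiency.** A family of stopping times $\tau$ indexed by a false-alarm parameter $\beta$ is called asymptotically efficient if, as $\beta\to\infty$, $\mathbb{E}_\infty[\tau]\ge\beta(1+o(1))$, and there exists a constant $C>0$ with $\mathbb{E}_1[\tau]\le C\log\beta\,(1+o(1))$. *)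

theory Defs
  imports "HOL-Probability.Probability" "HOL-Library.Landau_Symbols"
begin

definition resid :: "nat \<Rightarrow> nat \<Rightarrow> nat" where
  "resid T k = (if k mod T = 0 then T else k mod T)"

definition batch :: "nat \<Rightarrow> nat \<Rightarrow> (nat \<Rightarrow> nat) \<Rightarrow> nat \<Rightarrow> nat" where
  "batch T E N k = (THE j. j \<in> {1..E} \<and> N (j - 1) < resid T k \<and> resid T k \<le> N j)"

definition batches_ok :: "nat \<Rightarrow> nat \<Rightarrow> (nat \<Rightarrow> nat) \<Rightarrow> bool" where
  "batches_ok T E N \<longleftrightarrow> T \<ge> 1 \<and> E \<ge> 1 \<and> N 0 = 0 \<and> N E = T \<and> (\<forall>j<E. N j < N (Suc j))"

text \<open>KL divergence D(P||Q) (natural log) is finite: P << Q and the log-likelihood ratio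
  is P-integrable.  Library convention: KL_divergence b Q P = D(P||Q).\<close>
definition KL_finite :: "'a measure \<Rightarrow> 'a measure \<Rightarrow> bool" where
  "KL_finite P Q \<longleftrightarrow> absolutely_continuous Q P \<and> sets P = sets Q \<and>
     integrable P (entropy_density (exp 1) Q P)"

definition KL :: "'a measure \<Rightarrow> 'a measure \<Rightarrow> real" where
  "KL P Q = KL_divergence (exp 1) Q P"

text \<open>Law of the observation sequence (Y_1, Y_2, ...) (index 0 is a dummy coordinate)
  under the change time gamma; gamma = None means no change (P_infinity).\<close>
definition obs_law :: "'a measure \<Rightarrow> (real \<Rightarrow> 'a \<Rightarrow> real) \<Rightarrow> (nat \<Rightarrow> nat)
    \<Rightarrow> (nat \<Rightarrow> real) \<Rightarrow> (nat \<Rightarrow> real) \<Rightarrow> nat option \<Rightarrow> (nat \<Rightarrow> 'a) measure" where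
  "obs_law \<mu> p b \<theta> la \<gamma> = PiM UNIV (\<lambda>k.
      density \<mu> (\<lambda>y. ennreal (p (case \<gamma> of None \<Rightarrow> \<theta> (b k)
                                   | Some g \<Rightarrow> if k < g then \<theta> (b k) else la (b k)) y)))"

definition Lam :: "real set \<Rightarrow> (nat \<Rightarrow> real) \<Rightarrow> real \<Rightarrow> nat \<Rightarrow> real set" where
  "Lam \<Theta> \<theta> \<epsilon> e = {l \<in> \<Theta>. \<bar>l - \<theta> e\<bar> \<ge> \<epsilon>}"

definition Wstat :: "(real \<Rightarrow> 'a \<Rightarrow> real) \<Rightarrow> (nat \<Rightarrow> nat) \<Rightarrow> nat \<Rightarrow> (nat \<Rightarrow> real)
    \<Rightarrow> (nat \<Rightarrow> real set) \<Rightarrow> nat \<Rightarrow> (nat \<Rightarrow> 'a) \<Rightarrow> real" where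
  "Wstat p b E \<theta> \<Lambda> n Y = Max ((\<lambda>k. SUP lam \<in> (PiE {1..E} \<Lambda>).
       (\<Sum>i=k..n. ln (p (lam (b i)) (Y i) / p (\<theta> (b i)) (Y i)))) ` {1..n})"

definition stop_time :: "(nat \<Rightarrow> (nat \<Rightarrow> 'a) \<Rightarrow> real) \<Rightarrow> real \<Rightarrow> (nat \<Rightarrow> 'a) \<Rightarrow> ennreal" where
  "stop_time W A Y = (if \<exists>n\<ge>1. W n Y > A then of_nat (LEAST n. n \<ge> 1 \<and> W n Y > A) else \<infinity>)"

end

theory Submission
  imports Defs
begin

text \<open>Before the change, a window sum \<open>S\<close> of log-likelihood ratios for a fixed post-change parameter
  satisfies \<open>E exp S \<le> 1\<close>, so it exceeds \<open>A\<close> with probability at most \<open>exp (- A)\<close>. The parameter sets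
  being finite, a union bound over windows and parameters shows that for \<open>A = 3 ln \<beta> + K\<close> no alarm
  is raised before time \<open>\<lfloor>\<beta>\<rfloor>\<close> except with probability \<open>O (1 / \<beta>)\<close>, whence the false-alarm bound.

  After the change, the statistic dominates the cumulative log-likelihood ratio \<open>S\<^sub>n\<close> of the true
  parameters. By independence, \<open>E exp (- S\<^sub>n / 2)\<close> is a product of Bhattacharyya coefficients, each at
  most some \<open>r < 1\<close> because only finitely many parameter pairs occur. Chernoff's bound gives
  \<open>P (S\<^sub>n \<le> A) \<le> exp (A / 2) * r ^ n\<close>, and summing these tails bounds the detection delay by
  \<open>A / (2 ln (1 / r)) + O(1) = O(ln \<beta>)\<close>.\<close>

lemma nn_integral_PiM_prod:
  fixes M :: "nat \<Rightarrow> 'a measure"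
  assumes M: "\<And>i. prob_space (M i)" and J: "finite J"
    and f: "\<And>i. i \<in> J \<Longrightarrow> f i \<in> borel_measurable (M i)"
  shows "(\<integral>\<^sup>+ x. (\<Prod>i\<in>J. f i (x i)) \<partial>PiM UNIV M) = (\<Prod>i\<in>J. \<integral>\<^sup>+ y. f i y \<partial>M i)"
proof -
  interpret product_prob_space M UNIV
    by (metis M prob_space_imp_sigma_finite product_prob_space.intro product_prob_space_axioms.intro
        product_sigma_finite.intro)
  have [measurable]: "(\<lambda>x. \<Prod>i\<in>J. f i (x i)) \<in> borel_measurable (PiM J M)"
    using f J by measurable
  have "(\<integral>\<^sup>+ x. (\<Prod>i\<in>J. f i (x i)) \<partial>PiM UNIV M)
      = (\<integral>\<^sup>+ x. (\<Prod>i\<in>J. f i (restrict x J i)) \<partial>PiM UNIV M)"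
    by (intro nn_integral_cong prod.cong) auto
  also have "\<dots> = (\<integral>\<^sup>+ x. (\<Prod>i\<in>J. f i (x i)) \<partial>PiM J M)"
    using J by (subst distr_PiM_restrict_finite[symmetric, OF J]) (simp_all add: nn_integral_distr)
  also have "\<dots> = (\<Prod>i\<in>J. \<integral>\<^sup>+ y. f i y \<partial>M i)"
    by (rule product_nn_integral_prod[OF J f])
  finally show ?thesis .
qed

lemma nn_integral_PiM_exp_sum:
  fixes M :: "nat \<Rightarrow> 'a measure"
  assumes "\<And>i. prob_space (M i)" "finite J" "\<And>i. i \<in> J \<Longrightarrow> g i \<in> borel_measurable (M i)"
  shows "(\<integral>\<^sup>+ Y. ennreal (exp (c * (\<Sum>i\<in>J. g i (Y i)))) \<partial>PiM UNIV M)
       = (\<Prod>i\<in>J. \<integral>\<^sup>+ y. ennreal (exp (c * g i y)) \<partial>M i)"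
proof -
  have "(\<integral>\<^sup>+ Y. ennreal (exp (c * (\<Sum>i\<in>J. g i (Y i)))) \<partial>PiM UNIV M)
      = (\<integral>\<^sup>+ Y. (\<Prod>i\<in>J. ennreal (exp (c * g i (Y i)))) \<partial>PiM UNIV M)"
    using assms(2) by (simp add: sum_distrib_left exp_sum prod_ennreal)
  also have "\<dots> = (\<Prod>i\<in>J. \<integral>\<^sup>+ y. ennreal (exp (c * g i y)) \<partial>M i)"
    using assms by (intro nn_integral_PiM_prod) auto
  finally show ?thesis .
qed

lemma emeasure_gt_le_exp_neg:
  assumes [measurable]: "S \<in> borel_measurable M"
    and exp_S: "(\<integral>\<^sup>+ x. ennreal (exp (S x)) \<partial>M) \<le> 1"
  shows "emeasure M {x \<in> space M. a < S x} \<le> ennreal (exp (- a))"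
proof -
  have "emeasure M {x \<in> space M. a < S x} \<le> emeasure M {x \<in> space M. a \<le> S x}"
    by (intro emeasure_mono) auto
  also have "\<dots> \<le> ennreal (exp (- 1 * a)) * (\<integral>\<^sup>+ x. ennreal (exp (1 * S x)) * indicator (space M) x \<partial>M)"
    by (intro Chernoff_ineq_nn_integral_ge) auto
  also have "(\<integral>\<^sup>+ x. ennreal (exp (1 * S x)) * indicator (space M) x \<partial>M) = (\<integral>\<^sup>+ x. ennreal (exp (S x)) \<partial>M)"
    by (intro nn_integral_cong) simp
  also have "ennreal (exp (- 1 * a)) * \<dots> \<le> ennreal (exp (- a)) * 1"
    using mult_left_mono[OF exp_S, of "ennreal (exp (- a))"] by simp
  finally show ?thesis by simp
qed

lemma stop_time_ge:
  assumes "\<And>m. m \<in> {1..n} \<Longrightarrow> W m Y \<le> A"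
  shows "of_nat n \<le> stop_time W A Y"
proof (cases "\<exists>m\<ge>1. W m Y > A")
  case True
  define m where "m = (LEAST m. m \<ge> 1 \<and> W m Y > A)"
  have "m \<ge> 1 \<and> W m Y > A"
    unfolding m_def by (rule LeastI_ex) (use True in blast)
  then have "n < m"
    using assms by (meson atLeastAtMost_iff not_le not_less)
  then show ?thesis
    unfolding stop_time_def m_def[symmetric] using True by simp
qed (auto simp: stop_time_def)

lemma stop_time_le_suminf:
  assumes "1 \<le> n"
  shows "stop_time W A Y \<le> of_nat n + (\<Sum>j. of_bool (W (n + j) Y \<le> A))"
proof -
  let ?s = "\<Sum>j. of_bool (W (n + j) Y \<le> A) :: ennreal"
  have count: "of_nat (n + q) \<le> of_nat n + ?s" if "\<And>j. j < q \<Longrightarrow> W (n + j) Y \<le> A" for q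
  proof -
    have "of_nat q = (\<Sum>j<q. of_bool (W (n + j) Y \<le> A) :: ennreal)"
      using that by simp
    also have "\<dots> \<le> ?s"
      by (intro sum_le_suminf) auto
    finally show ?thesis by (simp add: add_left_mono)
  qed
  show ?thesis
  proof (cases "\<exists>m\<ge>1. W m Y > A")
    case True
    define m where "m = (LEAST m. m \<ge> 1 \<and> W m Y > A)"
    have before: "W k Y \<le> A" if "1 \<le> k" "k < m" for k
      using not_less_Least[of k "\<lambda>m. m \<ge> 1 \<and> W m Y > A"] that unfolding m_def by auto
    have "of_nat m \<le> of_nat n + ?s"
    proof (cases "m \<le> n")
      case False
      then have "of_nat (n + (m - n)) \<le> of_nat n + ?s"
        using assms by (intro count before) auto
      with False show ?thesis by simp
    qed (simp add: add_increasing2)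
    then show ?thesis
      unfolding stop_time_def m_def[symmetric] using True by simp
  next
    case False
    have "of_nat q \<le> of_nat n + ?s" for q
    proof -
      have "of_nat q \<le> (of_nat (n + q) :: ennreal)"
        by simp
      also have "\<dots> \<le> of_nat n + ?s"
        using False assms by (intro count) (metis le_add1 le_trans not_le)
      finally show ?thesis .
    qed
    then have "(SUP q. of_nat q :: ennreal) \<le> of_nat n + ?s"
      by (rule SUP_least)
    then show ?thesis
      by (simp add: ennreal_SUP_of_nat_eq_top top_unique)
  qed
qed

lemma batches_ok_mono:
  assumes "batches_ok T E N" "i \<le> j" "j \<le> E"
  shows "N i \<le> N j"
  using assms(2,3)
proof (induction j)
  case (Suc j)
  show ?case
  proof (cases "i = Suc j")
    case False
    with Suc have "N i \<le> N j" by simp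
    also have "N j < N (Suc j)" using assms(1) Suc.prems unfolding batches_ok_def by auto
    finally show ?thesis by simp
  qed simp
qed simp

lemma batch_in_range:
  assumes B: "batches_ok T E N"
  shows "batch T E N k \<in> {1..E}"
proof -
  define r where "r = resid T k"
  have r: "1 \<le> r" "r \<le> T"
    using B mod_less_divisor[of T k] unfolding r_def resid_def batches_ok_def by auto
  define j where "j = (LEAST j. r \<le> N j)"
  have j1: "r \<le> N j"
    unfolding j_def by (rule LeastI[of _ E]) (use r B in \<open>simp add: batches_ok_def\<close>)
  have jE: "j \<le> E"
    unfolding j_def by (rule Least_le) (use r B in \<open>simp add: batches_ok_def\<close>)
  have j0: "1 \<le> j"
  proof (rule ccontr)
    assume "\<not> 1 \<le> j"
    then have "j = 0" by simp
    with j1 r B show False by (simp add: batches_ok_def)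
  qed
  have j2: "N (j - 1) < r"
    using not_less_Least[of "j - 1" "\<lambda>j. r \<le> N j"] j0 unfolding j_def by (simp add: not_le)
  have unique: "j' = j" if j': "j' \<in> {1..E}" "N (j' - 1) < r" "r \<le> N j'" for j'
  proof (rule linorder_cases[of j' j])
    assume "j' < j"
    then have "N j' \<le> N (j - 1)" using batches_ok_mono[OF B, of j' "j - 1"] jE by simp
    then show ?thesis using j' j2 by simp
  next
    assume "j < j'"
    then have "N j \<le> N (j' - 1)" using batches_ok_mono[OF B, of j "j' - 1"] j' by simp
    then show ?thesis using j' j1 by simp
  qed
  have "batch T E N k = j"
    unfolding batch_def r_def[symmetric]
  proof (rule the_equality)
    show "j \<in> {1..E} \<and> N (j - 1) < r \<and> r \<le> N j"
      using j0 jE j1 j2 by simp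
  qed (use unique in blast)
  then show ?thesis using j0 jE by simp
qed

lemma Wstat_ge_sum:
  assumes "finite (PiE {1..E} \<Lambda>)" "1 \<le> n" "lam \<in> PiE {1..E} \<Lambda>"
  shows "(\<Sum>i=1..n. ln (p (lam (b i)) (Y i) / p (\<theta> (b i)) (Y i))) \<le> Wstat p b E \<theta> \<Lambda> n Y"
proof -
  let ?F = "\<lambda>k. SUP lam \<in> PiE {1..E} \<Lambda>. \<Sum>i=k..n. ln (p (lam (b i)) (Y i) / p (\<theta> (b i)) (Y i))"
  have "(\<Sum>i=1..n. ln (p (lam (b i)) (Y i) / p (\<theta> (b i)) (Y i))) \<le> ?F 1"
    using assms by (intro cSUP_upper) auto
  also have "\<dots> \<le> Max (?F ` {1..n})"
    using assms by (intro Max_ge) auto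
  finally show ?thesis unfolding Wstat_def .
qed

text \<open>If the parameter set is empty, \<open>Wstat\<close> is the junk value \<open>Sup {}\<close>; hence the last hypothesis.\<close>
lemma Wstat_gt_imp_sum_gt:
  assumes "finite (PiE {1..E} \<Lambda>)" "1 \<le> n" "Wstat p b E \<theta> \<Lambda> n Y > A" "Sup ({} :: real set) \<le> A"
  shows "\<exists>k\<in>{1..n}. \<exists>lam\<in>PiE {1..E} \<Lambda>.
    (\<Sum>i=k..n. ln (p (lam (b i)) (Y i) / p (\<theta> (b i)) (Y i))) > A"
proof -
  let ?F = "\<lambda>k. SUP lam \<in> PiE {1..E} \<Lambda>. \<Sum>i=k..n. ln (p (lam (b i)) (Y i) / p (\<theta> (b i)) (Y i))"
  obtain k where k: "k \<in> {1..n}" "A < ?F k"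
    using assms(2,3) unfolding Wstat_def by (subst (asm) Max_gr_iff) auto
  then have "PiE {1..E} \<Lambda> \<noteq> {}"
    using assms(4) by auto
  then show ?thesis
    using k assms(1) by (subst (asm) less_cSUP_iff) auto
qed

text \<open>Pointwise \<open>(f + g) / 2 = sqrt (f * g) + (sqrt f - sqrt g)\<^sup>2 / 2\<close>, and the last term has
  positive mass unless \<open>f = g\<close> almost everywhere.\<close>
lemma nn_integral_sqrt_mult_lt_1:
  assumes [measurable]: "f \<in> borel_measurable M" "g \<in> borel_measurable M"
    and nonneg: "\<And>y. y \<in> space M \<Longrightarrow> 0 \<le> f y" "\<And>y. y \<in> space M \<Longrightarrow> 0 \<le> g y"
    and total: "(\<integral>\<^sup>+ y. ennreal (f y) \<partial>M) = 1" "(\<integral>\<^sup>+ y. ennreal (g y) \<partial>M) = 1"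
    and distinct: "density M (\<lambda>y. ennreal (f y)) \<noteq> density M (\<lambda>y. ennreal (g y))"
  shows "(\<integral>\<^sup>+ y. ennreal (sqrt (f y * g y)) \<partial>M) < 1"
proof -
  define d where "d y = (sqrt (f y) - sqrt (g y))\<^sup>2 / 2" for y
  have split: "ennreal (1/2) * (ennreal (f y) + ennreal (g y)) = ennreal (sqrt (f y * g y)) + ennreal (d y)"
    if "y \<in> space M" for y
  proof -
    have mean: "(f y + g y) / 2 = sqrt (f y * g y) + d y"
      using nonneg[OF that] by (simp add: d_def power2_diff real_sqrt_mult field_simps)
    have "ennreal (1/2) * (ennreal (f y) + ennreal (g y)) = ennreal ((f y + g y) / 2)"
      using nonneg[OF that]
      by (simp add: ennreal_plus[symmetric] ennreal_mult'[symmetric] del: ennreal_plus ennreal_half)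
    also have "\<dots> = ennreal (sqrt (f y * g y)) + ennreal (d y)"
      unfolding mean using nonneg[OF that] by (intro ennreal_plus) (auto simp: d_def)
    finally show ?thesis .
  qed
  have "(\<integral>\<^sup>+ y. ennreal (sqrt (f y * g y)) \<partial>M) + (\<integral>\<^sup>+ y. ennreal (d y) \<partial>M)
      = (\<integral>\<^sup>+ y. ennreal (sqrt (f y * g y)) + ennreal (d y) \<partial>M)"
    by (rule nn_integral_add[symmetric]) (simp_all add: d_def)
  also have "\<dots> = (\<integral>\<^sup>+ y. ennreal (1/2) * (ennreal (f y) + ennreal (g y)) \<partial>M)"
    by (intro nn_integral_cong split[symmetric])
  also have "\<dots> = ennreal (1/2) * ((\<integral>\<^sup>+ y. ennreal (f y) \<partial>M) + (\<integral>\<^sup>+ y. ennreal (g y) \<partial>M))"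
    by (simp add: nn_integral_cmult nn_integral_add)
  also have "\<dots> = 1"
    unfolding total by (simp add: ennreal_numeral[symmetric] ennreal_mult'[symmetric] del: ennreal_numeral ennreal_half)
  finally have sum_1: "(\<integral>\<^sup>+ y. ennreal (sqrt (f y * g y)) \<partial>M) + (\<integral>\<^sup>+ y. ennreal (d y) \<partial>M) = 1" .
  show ?thesis
  proof (rule ccontr)
    assume "\<not> ?thesis"
    then have "(\<integral>\<^sup>+ y. ennreal (sqrt (f y * g y)) \<partial>M) = 1"
      using sum_1 by (metis antisym le_iff_add not_le)
    then have "(\<integral>\<^sup>+ y. ennreal (d y) \<partial>M) = 0"
      using sum_1 by (simp add: ennreal_add_left_cancel[of 1 _ 0, simplified])
    then have "AE y in M. ennreal (d y) = 0"
      by (simp add: d_def nn_integral_0_iff_AE)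
    then have "AE y in M. ennreal (f y) = ennreal (g y)"
      by (rule AE_mp, intro AE_I2) (use nonneg in \<open>auto simp: d_def\<close>)
    then have "density M (\<lambda>y. ennreal (f y)) = density M (\<lambda>y. ennreal (g y))"
      by (intro density_cong) auto
    with distinct show False ..
  qed
qed

lemma exp_mult_power_ceiling_le_1:
  fixes a r :: real
  assumes "0 < r" "r < 1"
  shows "exp a * r ^ nat \<lceil>a / ln (1 / r)\<rceil> \<le> 1"
proof -
  define k where "k = nat \<lceil>a / ln (1 / r)\<rceil>"
  have c: "0 < ln (1 / r)"
    using assms by simp
  have "a / ln (1 / r) \<le> real k"
    unfolding k_def by linarith
  then have "a \<le> real k * ln (1 / r)"
    using c by (simp add: field_simps)
  moreover have "r ^ k = exp (- (real k * ln (1 / r)))"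
    using assms by (simp add: ln_div exp_of_nat_mult)
  ultimately show ?thesis
    unfolding k_def[symmetric] by (simp add: exp_add[symmetric])
qed

lemma suminf_ennreal_geometric:
  fixes r :: real
  assumes "0 \<le> r" "r < 1"
  shows "(\<Sum>j. ennreal (r ^ j)) = ennreal (1 / (1 - r))"
  using assms geometric_sums[of r]
  by (subst suminf_ennreal2) (auto simp: sums_summable sums_unique[symmetric])

lemma finite_ennreal_less_1_bound:
  assumes "finite R" "\<And>x. x \<in> R \<Longrightarrow> x < (1 :: ennreal)"
  shows "\<exists>r :: real. 0 < r \<and> r < 1 \<and> (\<forall>x\<in>R. x \<le> ennreal r)"
proof (cases "R = {}")
  case False
  then have "Max R < 1"
    using assms by simp
  then obtain m where m: "0 \<le> m" "m < 1" "Max R = ennreal m"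
    by (cases "Max R") auto
  then have "\<forall>x\<in>R. x \<le> ennreal (max (1/2) m)"
    using assms(1) by (metis Max_ge ennreal_leI max.cobounded2 order_trans)
  with m show ?thesis
    by (intro exI[of _ "max (1/2) m"]) auto
qed (intro exI[of _ "1/2"], auto)

lemma threshold_bigo: "(\<lambda>x :: real. 3 * ln x + K) \<in> O(ln)"
  by real_asymp

lemma mult_one_minus_inverse_sq_le_floor:
  fixes \<beta> c K :: real
  assumes "2 \<le> \<beta>" "0 \<le> c" "c * exp (- K) \<le> 1"
  defines "n \<equiv> nat \<lfloor>\<beta>\<rfloor>"
  shows "\<beta> * (1 - 1 / \<beta>)\<^sup>2 \<le> real n * (1 - real n ^ 2 * c * exp (- (3 * ln \<beta> + K)))"
proof -
  have n: "\<beta> - 1 \<le> real n" "real n \<le> \<beta>"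
    using assms(1) unfolding n_def by linarith+
  have "exp (- (3 * ln \<beta> + K)) = exp (- K - 3 * ln \<beta>)"
    by simp
  also have "\<dots> = exp (- K) / \<beta> ^ 3"
    using assms(1) exp_of_nat_mult[of 3 "ln \<beta>"] by (simp add: exp_diff)
  finally have "exp (- (3 * ln \<beta> + K)) = exp (- K) / \<beta> ^ 3" .
  then have "real n ^ 2 * c * exp (- (3 * ln \<beta> + K)) \<le> \<beta> ^ 2 * (c * exp (- K)) / \<beta> ^ 3"
    using n assms(2) by (simp add: mult.assoc divide_right_mono power_mono mult_right_mono)
  also have "\<dots> \<le> \<beta> ^ 2 * 1 / \<beta> ^ 3"
    using assms(1,3) by (intro divide_right_mono mult_left_mono) auto
  also have "\<dots> = 1 / \<beta>"
    using assms(1) by (simp add: power2_eq_square power3_eq_cube)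
  finally have "1 - 1 / \<beta> \<le> 1 - real n ^ 2 * c * exp (- (3 * ln \<beta> + K))"
    by simp
  then have "(\<beta> - 1) * (1 - 1 / \<beta>) \<le> real n * (1 - real n ^ 2 * c * exp (- (3 * ln \<beta> + K)))"
    using n(1) assms(1) by (intro mult_mono) auto
  moreover have "\<beta> * (1 - 1 / \<beta>)\<^sup>2 = (\<beta> - 1) * (1 - 1 / \<beta>)"
    using assms(1) by (simp add: power2_eq_square field_simps)
  ultimately show ?thesis
    by simp
qed

locale density_family =
  fixes \<mu> :: "'a measure" and p :: "real \<Rightarrow> 'a \<Rightarrow> real" and \<Theta> :: "real set"
  assumes density_measurable: "\<And>t. t \<in> \<Theta> \<Longrightarrow> p t \<in> borel_measurable \<mu>"
    and density_nonneg: "\<And>t y. t \<in> \<Theta> \<Longrightarrow> y \<in> space \<mu> \<Longrightarrow> p t y \<ge> 0"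
    and prob_space_law: "\<And>t. t \<in> \<Theta> \<Longrightarrow> prob_space (density \<mu> (\<lambda>y. ennreal (p t y)))"
begin

abbreviation law :: "real \<Rightarrow> 'a measure" where
  "law t \<equiv> density \<mu> (\<lambda>y. ennreal (p t y))"

abbreviation obs :: "(nat \<Rightarrow> real) \<Rightarrow> (nat \<Rightarrow> 'a) measure" where
  "obs par \<equiv> PiM UNIV (\<lambda>k. law (par k))"

abbreviation bhattacharyya :: "real \<Rightarrow> real \<Rightarrow> ennreal" where
  "bhattacharyya t s \<equiv> \<integral>\<^sup>+ y. ennreal (exp (- (1/2) * ln (p t y / p s y))) \<partial>law t"

lemma nn_integral_density_eq_1:
  assumes "t \<in> \<Theta>"
  shows "(\<integral>\<^sup>+ y. ennreal (p t y) \<partial>\<mu>) = 1"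
proof -
  interpret prob_space "law t" by (rule prob_space_law[OF assms])
  show ?thesis
    using emeasure_space_1 density_measurable[OF assms] by (simp add: emeasure_density)
qed

lemma AE_law_density_pos:
  assumes "t \<in> \<Theta>" "s \<in> \<Theta>" "absolutely_continuous (law t) (law s)"
  shows "AE y in law s. 0 < p t y"
proof (rule absolutely_continuous_AE[OF _ assms(3)])
  show "AE y in law t. 0 < p t y"
    using density_measurable[OF assms(1)] by (simp add: AE_density)
qed simp

lemma llr_measurable:
  assumes "s \<in> \<Theta>" "t \<in> \<Theta>" "sets M = sets \<mu>"
  shows "(\<lambda>y. ln (p s y / p t y)) \<in> borel_measurable M"
  using density_measurable[OF assms(1)] density_measurable[OF assms(2)]
  by (simp add: measurable_cong_sets[OF assms(3) refl])

lemma nn_integral_exp_llr_le_1: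
  assumes t: "t \<in> \<Theta>" and s: "s \<in> \<Theta>" and ac: "absolutely_continuous (law t) (law s)"
  shows "(\<integral>\<^sup>+ y. ennreal (exp (ln (p t y / p s y))) \<partial>law s) \<le> 1"
proof -
  note [measurable] = density_measurable[OF t] density_measurable[OF s]
  have "(\<integral>\<^sup>+ y. ennreal (exp (ln (p t y / p s y))) \<partial>law s) = (\<integral>\<^sup>+ y. ennreal (p t y / p s y) \<partial>law s)"
    using AE_law_density_pos[OF t s ac] AE_law_density_pos[OF s s]
    by (intro nn_integral_cong_AE) (auto simp: absolutely_continuous_def)
  also have "\<dots> = (\<integral>\<^sup>+ y. ennreal (p s y) * ennreal (p t y / p s y) \<partial>\<mu>)"
    by (intro nn_integral_density) auto
  also have "\<dots> \<le> (\<integral>\<^sup>+ y. ennreal (p t y) \<partial>\<mu>)"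
    using density_nonneg[OF s] density_nonneg[OF t]
    by (intro nn_integral_mono) (auto simp: ennreal_mult'[symmetric] less_le)
  also have "\<dots> = 1"
    by (rule nn_integral_density_eq_1[OF t])
  finally show ?thesis .
qed

lemma bhattacharyya_lt_1:
  assumes t: "t \<in> \<Theta>" and s: "s \<in> \<Theta>" and ac: "absolutely_continuous (law s) (law t)"
    and distinct: "law t \<noteq> law s"
  shows "bhattacharyya t s < 1"
proof -
  note [measurable] = density_measurable[OF t] density_measurable[OF s]
  have exp_half: "exp (- (1/2) * ln (a / b)) = sqrt (b / a)" if "0 < a" "0 < b" for a b :: real
  proof -
    have "- (1/2) * ln (a / b) = 1/2 * ln (b / a)"
      using that by (simp add: ln_div field_simps)
    then show ?thesis
      using that by (simp add: powr_def powr_half_sqrt[symmetric])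
  qed
  have "AE y in law t. 0 < p t y \<and> 0 < p s y"
    using AE_law_density_pos[OF s t ac] AE_law_density_pos[OF t t]
    by (auto simp: absolutely_continuous_def)
  then have "(\<integral>\<^sup>+ y. ennreal (exp (- (1/2) * ln (p t y / p s y))) \<partial>law t)
      = (\<integral>\<^sup>+ y. ennreal (sqrt (p s y / p t y)) \<partial>law t)"
    by (intro nn_integral_cong_AE, rule eventually_mono) (metis exp_half)
  also have "\<dots> = (\<integral>\<^sup>+ y. ennreal (p t y) * ennreal (sqrt (p s y / p t y)) \<partial>\<mu>)"
    by (intro nn_integral_density) auto
  also have "\<dots> = (\<integral>\<^sup>+ y. ennreal (sqrt (p t y * p s y)) \<partial>\<mu>)"
  proof (intro nn_integral_cong)
    fix y assume y: "y \<in> space \<mu>"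
    show "ennreal (p t y) * ennreal (sqrt (p s y / p t y)) = ennreal (sqrt (p t y * p s y))"
      using density_nonneg[OF t y] density_nonneg[OF s y]
      by (cases "p t y = 0")
        (auto simp: ennreal_mult'[symmetric] real_sqrt_divide real_sqrt_mult field_simps)
  qed
  also have "\<dots> < 1"
    using density_nonneg[OF t] density_nonneg[OF s] distinct
    by (intro nn_integral_sqrt_mult_lt_1 nn_integral_density_eq_1 t s) auto
  finally show ?thesis .
qed

lemma prob_space_obs:
  "(\<And>k. par k \<in> \<Theta>) \<Longrightarrow> prob_space (obs par)"
  using prob_space_law by (intro prob_space_PiM) auto

lemma llr_sum_measurable:
  assumes "\<And>k. par k \<in> \<Theta>" "\<And>i. i \<in> J \<Longrightarrow> s i \<in> \<Theta> \<and> t i \<in> \<Theta>"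
  shows "(\<lambda>Y. \<Sum>i\<in>J. ln (p (s i) (Y i) / p (t i) (Y i))) \<in> borel_measurable (obs par)"
proof (intro borel_measurable_sum)
  fix i assume "i \<in> J"
  then have "(\<lambda>y. ln (p (s i) y / p (t i) y)) \<in> borel_measurable (law (par i))"
    using assms by (intro llr_measurable) auto
  then show "(\<lambda>Y. ln (p (s i) (Y i) / p (t i) (Y i))) \<in> borel_measurable (obs par)"
    by (rule measurable_compose[OF measurable_component_singleton, rotated]) simp
qed

lemma nn_integral_obs_exp_llr_sum:
  assumes "\<And>k. par k \<in> \<Theta>" "finite J" "\<And>i. i \<in> J \<Longrightarrow> s i \<in> \<Theta> \<and> t i \<in> \<Theta>"
  shows "(\<integral>\<^sup>+ Y. ennreal (exp (c * (\<Sum>i\<in>J. ln (p (s i) (Y i) / p (t i) (Y i))))) \<partial>obs par)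
       = (\<Prod>i\<in>J. \<integral>\<^sup>+ y. ennreal (exp (c * ln (p (s i) y / p (t i) y))) \<partial>law (par i))"
  using assms prob_space_law by (intro nn_integral_PiM_exp_sum llr_measurable) auto

end

locale all_batch_change = density_family +
  fixes T E :: nat and N :: "nat \<Rightarrow> nat" and \<theta> :: "nat \<Rightarrow> real" and \<epsilon> :: real
  assumes KL_finite_pos: "\<And>t s. t \<in> \<Theta> \<Longrightarrow> s \<in> \<Theta> \<Longrightarrow> t \<noteq> s \<Longrightarrow>
      KL_finite (law t) (law s) \<and> KL (law t) (law s) > 0"
    and batches: "batches_ok T E N"
    and baseline_in: "\<And>e. e \<in> {1..E} \<Longrightarrow> \<theta> e \<in> \<Theta>"
    and eps_pos: "\<epsilon> > 0"
    and Lam_finite: "\<And>e. e \<in> {1..E} \<Longrightarrow> finite (Lam \<Theta> \<theta> \<epsilon> e)"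
begin

abbreviation post_params :: "(nat \<Rightarrow> real) set" where
  "post_params \<equiv> PiE {1..E} (Lam \<Theta> \<theta> \<epsilon>)"

abbreviation glr_stop :: "real \<Rightarrow> (nat \<Rightarrow> 'a) \<Rightarrow> ennreal" where
  "glr_stop A \<equiv> stop_time (\<lambda>n. Wstat p (batch T E N) E \<theta> (Lam \<Theta> \<theta> \<epsilon>) n) A"

abbreviation llr_sum :: "(nat \<Rightarrow> real) \<Rightarrow> nat set \<Rightarrow> (nat \<Rightarrow> 'a) \<Rightarrow> real" where
  "llr_sum la J Y \<equiv> \<Sum>i\<in>J. ln (p (la (batch T E N i)) (Y i) / p (\<theta> (batch T E N i)) (Y i))"

abbreviation pre_change_obs :: "(nat \<Rightarrow> 'a) measure" where
  "pre_change_obs \<equiv> obs (\<lambda>k. \<theta> (batch T E N k))"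

abbreviation post_change_obs :: "(nat \<Rightarrow> real) \<Rightarrow> (nat \<Rightarrow> 'a) measure" where
  "post_change_obs la \<equiv> obs (\<lambda>k. if k < 1 then \<theta> (batch T E N k) else la (batch T E N k))"

lemma obs_law_no_change: "obs_law \<mu> p (batch T E N) \<theta> \<theta> None = pre_change_obs"
  by (simp add: obs_law_def)

lemma obs_law_change_at_1: "obs_law \<mu> p (batch T E N) \<theta> la (Some 1) = post_change_obs la"
  by (simp add: obs_law_def)

lemma Lam_subset: "l \<in> Lam \<Theta> \<theta> \<epsilon> e \<Longrightarrow> l \<in> \<Theta>"
  by (simp add: Lam_def)

lemma Lam_neq: "l \<in> Lam \<Theta> \<theta> \<epsilon> e \<Longrightarrow> l \<noteq> \<theta> e"
  using eps_pos by (auto simp: Lam_def)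

lemma finite_post_params: "finite post_params"
  using Lam_finite by (intro finite_PiE) auto

lemma baseline_batch_in: "\<theta> (batch T E N k) \<in> \<Theta>"
  using baseline_in batch_in_range[OF batches] by blast

lemma post_batch_in:
  assumes "\<forall>e\<in>{1..E}. la e \<in> Lam \<Theta> \<theta> \<epsilon> e"
  shows "la (batch T E N k) \<in> \<Theta>" "la (batch T E N k) \<noteq> \<theta> (batch T E N k)"
  using assms batch_in_range[OF batches] Lam_subset Lam_neq by blast+

lemma post_change_params_in:
  "\<forall>e\<in>{1..E}. la e \<in> Lam \<Theta> \<theta> \<epsilon> e \<Longrightarrow>
    (if k < 1 then \<theta> (batch T E N k) else la (batch T E N k)) \<in> \<Theta>"
  using baseline_batch_in post_batch_in by simp

lemma llr_sum_measurable_batch: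
  assumes "\<And>k. par k \<in> \<Theta>" "\<forall>e\<in>{1..E}. la e \<in> Lam \<Theta> \<theta> \<epsilon> e"
  shows "llr_sum la J \<in> borel_measurable (obs par)"
  using assms post_batch_in baseline_batch_in by (intro llr_sum_measurable) auto

lemma law_absolutely_continuous:
  "t \<in> \<Theta> \<Longrightarrow> s \<in> \<Theta> \<Longrightarrow> t \<noteq> s \<Longrightarrow> absolutely_continuous (law s) (law t)"
  using KL_finite_pos by (simp add: KL_finite_def)

lemma law_neq:
  assumes "t \<in> \<Theta>" "s \<in> \<Theta>" "t \<noteq> s"
  shows "law t \<noteq> law s"
proof
  assume same: "law t = law s"
  interpret prob_space "law s"
    using prob_space_law assms by auto
  have "KL (law t) (law s) = 0"
    unfolding KL_def same by (rule KL_same_eq_0)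
  with KL_finite_pos[OF assms] show False by simp
qed

lemma emeasure_llr_sum_gt_le_exp:
  assumes lam: "\<forall>e\<in>{1..E}. lam e \<in> Lam \<Theta> \<theta> \<epsilon> e"
  shows "emeasure pre_change_obs {Y \<in> space pre_change_obs. A < llr_sum lam {k..m} Y}
    \<le> ennreal (exp (- A))"
proof (rule emeasure_gt_le_exp_neg)
  show "llr_sum lam {k..m} \<in> borel_measurable pre_change_obs"
    using baseline_batch_in lam by (rule llr_sum_measurable_batch)
  have "(\<integral>\<^sup>+ Y. ennreal (exp (1 * llr_sum lam {k..m} Y)) \<partial>pre_change_obs)
    = (\<Prod>i=k..m. \<integral>\<^sup>+ y. ennreal (exp (1 * ln (p (lam (batch T E N i)) y / p (\<theta> (batch T E N i)) y)))
        \<partial>law (\<theta> (batch T E N i)))"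
    using post_batch_in[OF lam] baseline_batch_in by (intro nn_integral_obs_exp_llr_sum) auto
  also have "\<dots> \<le> 1"
  proof (intro prod_le_1 conjI zero_le)
    fix i
    have "absolutely_continuous (law (lam (batch T E N i))) (law (\<theta> (batch T E N i)))"
      using post_batch_in[OF lam, of i] baseline_batch_in[of i] by (metis law_absolutely_continuous)
    then show "(\<integral>\<^sup>+ y. ennreal (exp (1 * ln (p (lam (batch T E N i)) y / p (\<theta> (batch T E N i)) y)))
        \<partial>law (\<theta> (batch T E N i))) \<le> 1"
      using post_batch_in[OF lam] baseline_batch_in nn_integral_exp_llr_le_1 by simp
  qed
  finally show "(\<integral>\<^sup>+ Y. ennreal (exp (llr_sum lam {k..m} Y)) \<partial>pre_change_obs) \<le> 1"
    by simp
qed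

text \<open>An alarm by time \<open>n\<close> needs some \<open>llr_sum lam {k..m}\<close> with \<open>k, m \<in> {1..n}\<close> to exceed \<open>A\<close>; the
  union bound over these \<open>n\<^sup>2 * card post_params\<close> events is the estimate.\<close>
lemma false_alarm_bound:
  assumes "Sup ({} :: real set) \<le> A" "1 \<le> n"
  shows "ennreal (real n * (1 - real n ^ 2 * real (card post_params) * exp (- A)))
    \<le> (\<integral>\<^sup>+ Y. glr_stop A Y \<partial>obs_law \<mu> p (batch T E N) \<theta> \<theta> None)"
proof -
  let ?P = pre_change_obs
  interpret P: prob_space ?P
    using baseline_batch_in by (rule prob_space_obs)
  define Bad where "Bad = (\<lambda>(m, k, lam). {Y \<in> space ?P. A < llr_sum lam {k..m} Y})"
  define I where "I = {1..n} \<times> {1..n} \<times> post_params"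
  define U where "U = (\<Union>x\<in>I. Bad x)"
  have fin_I: "finite I" and card_I: "card I = n * n * card post_params"
    using finite_post_params by (simp_all add: I_def card_cartesian_product)
  have Bad: "Bad x \<in> sets ?P" "measure ?P (Bad x) \<le> exp (- A)" if "x \<in> I" for x
  proof -
    obtain m k lam where x: "x = (m, k, lam)"
      by (cases x)
    with that have lam: "\<forall>e\<in>{1..E}. lam e \<in> Lam \<Theta> \<theta> \<epsilon> e"
      by (simp add: I_def PiE_iff)
    then have [measurable]: "llr_sum lam {k..m} \<in> borel_measurable ?P"
      using baseline_batch_in by (intro llr_sum_measurable_batch) auto
    show "Bad x \<in> sets ?P"
      unfolding x Bad_def prod.case by measurable
    have "emeasure ?P (Bad x) \<le> ennreal (exp (- A))"
      unfolding x Bad_def prod.case by (rule emeasure_llr_sum_gt_le_exp[OF lam])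
    then show "measure ?P (Bad x) \<le> exp (- A)"
      by (simp add: P.emeasure_eq_measure)
  qed
  have "measure ?P U \<le> (\<Sum>x\<in>I. measure ?P (Bad x))"
    unfolding U_def using fin_I Bad by (intro P.finite_measure_subadditive_finite) auto
  also have "\<dots> \<le> (\<Sum>x\<in>I. exp (- A))"
    using Bad by (intro sum_mono)
  finally have measure_U: "measure ?P U \<le> real n ^ 2 * real (card post_params) * exp (- A)"
    by (simp add: card_I power2_eq_square)
  have U_sets: "U \<in> sets ?P"
    unfolding U_def using fin_I Bad by auto
  have no_alarm: "of_nat n * indicator (space ?P - U) Y \<le> glr_stop A Y" for Y
  proof (cases "Y \<in> space ?P - U")
    case True
    have "Wstat p (batch T E N) E \<theta> (Lam \<Theta> \<theta> \<epsilon>) m Y \<le> A" if m: "m \<in> {1..n}" for m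
    proof (rule ccontr)
      assume "\<not> ?thesis"
      then have "\<exists>k\<in>{1..m}. \<exists>lam\<in>post_params. A < llr_sum lam {k..m} Y"
        using m by (intro Wstat_gt_imp_sum_gt[OF finite_post_params _ _ assms(1)]) auto
      then obtain k lam where "k \<in> {1..m}" "lam \<in> post_params" "A < llr_sum lam {k..m} Y"
        by blast
      then have "Y \<in> Bad (m, k, lam)" "(m, k, lam) \<in> I"
        using True m by (auto simp: Bad_def I_def)
      with True show False
        unfolding U_def by blast
    qed
    then have "of_nat n \<le> glr_stop A Y"
      by (rule stop_time_ge)
    with True show ?thesis
      by simp
  qed simp
  have "ennreal (real n * (1 - real n ^ 2 * real (card post_params) * exp (- A)))
      \<le> ennreal (real n * measure ?P (space ?P - U))"
    using measure_U U_sets by (intro ennreal_leI mult_left_mono) (auto simp: P.prob_compl)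
  also have "\<dots> = (\<integral>\<^sup>+ Y. of_nat n * indicator (space ?P - U) Y \<partial>?P)"
    using U_sets by (simp add: nn_integral_cmult_indicator P.emeasure_eq_measure ennreal_mult'
        ennreal_of_nat_eq_real_of_nat)
  also have "\<dots> \<le> (\<integral>\<^sup>+ Y. glr_stop A Y \<partial>?P)"
    by (intro nn_integral_mono no_alarm)
  finally show ?thesis
    by (simp add: obs_law_no_change)
qed

lemma emeasure_llr_sum_le_post_change:
  assumes la: "\<forall>e\<in>{1..E}. la e \<in> Lam \<Theta> \<theta> \<epsilon> e" and "0 \<le> r"
    and bhatt: "\<forall>e\<in>{1..E}. \<forall>l\<in>Lam \<Theta> \<theta> \<epsilon> e. bhattacharyya l (\<theta> e) \<le> ennreal r"
  shows "emeasure (post_change_obs la) {Y \<in> space (post_change_obs la). llr_sum la {1..m} Y \<le> A}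
    \<le> ennreal (exp (A / 2) * r ^ m)"
proof -
  let ?P = "post_change_obs la"
  have "(\<integral>\<^sup>+ Y. ennreal (exp (- (1/2) * llr_sum la {1..m} Y)) * indicator (space ?P) Y \<partial>?P)
    = (\<integral>\<^sup>+ Y. ennreal (exp (- (1/2) * llr_sum la {1..m} Y)) \<partial>?P)"
    by (intro nn_integral_cong) simp
  also have "\<dots> = (\<Prod>i=1..m. \<integral>\<^sup>+ y. ennreal (exp (- (1/2) * ln (p (la (batch T E N i)) y / p (\<theta> (batch T E N i)) y)))
        \<partial>law (if i < 1 then \<theta> (batch T E N i) else la (batch T E N i)))"
    using post_change_params_in[OF la] post_batch_in[OF la] baseline_batch_in
    by (intro nn_integral_obs_exp_llr_sum) auto
  also have "\<dots> = (\<Prod>i=1..m. bhattacharyya (la (batch T E N i)) (\<theta> (batch T E N i)))"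
    by (intro prod.cong) auto
  also have "\<dots> \<le> (\<Prod>i=1..m. ennreal r)"
    using batch_in_range[OF batches] la bhatt by (intro prod_mono_ennreal) auto
  also have "\<dots> = ennreal (r ^ m)"
    using \<open>0 \<le> r\<close> by (simp add: ennreal_power)
  finally have integral_le:
    "(\<integral>\<^sup>+ Y. ennreal (exp (- (1/2) * llr_sum la {1..m} Y)) * indicator (space ?P) Y \<partial>?P)
      \<le> ennreal (r ^ m)" .
  have "llr_sum la {1..m} \<in> borel_measurable ?P"
    using post_change_params_in[OF la] la by (rule llr_sum_measurable_batch)
  then have "emeasure ?P {Y \<in> space ?P. llr_sum la {1..m} Y \<le> A}
    \<le> ennreal (exp (1/2 * A))
      * (\<integral>\<^sup>+ Y. ennreal (exp (- (1/2) * llr_sum la {1..m} Y)) * indicator (space ?P) Y \<partial>?P)"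
    by (intro Chernoff_ineq_nn_integral_le) simp_all
  also have "\<dots> \<le> ennreal (exp (1/2 * A)) * ennreal (r ^ m)"
    by (rule mult_left_mono[OF integral_le]) simp
  finally show ?thesis
    by (simp add: ennreal_mult')
qed

text \<open>Past time \<open>k + 1\<close>, every step without alarm has \<open>llr_sum la {1..k + 1 + j} \<le> A\<close>, an event of
  probability at most \<open>r ^ j\<close> once \<open>r ^ k\<close> has absorbed the factor \<open>exp (A / 2)\<close>.\<close>
lemma detection_delay_bound:
  assumes la: "\<forall>e\<in>{1..E}. la e \<in> Lam \<Theta> \<theta> \<epsilon> e" and r: "0 < r" "r < 1"
    and bhatt: "\<forall>e\<in>{1..E}. \<forall>l\<in>Lam \<Theta> \<theta> \<epsilon> e. bhattacharyya l (\<theta> e) \<le> ennreal r"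
    and "0 \<le> A"
  shows "(\<integral>\<^sup>+ Y. glr_stop A Y \<partial>obs_law \<mu> p (batch T E N) \<theta> la (Some 1))
    \<le> ennreal (A / (2 * ln (1 / r)) + 2 + 1 / (1 - r))"
proof -
  define P where "P = post_change_obs la"
  interpret P: prob_space P
    unfolding P_def using post_change_params_in[OF la] by (rule prob_space_obs)
  define k where "k = nat \<lceil>A / 2 / ln (1 / r)\<rceil>"
  define Late where "Late j = {Y \<in> space P. llr_sum la {1..k + 1 + j} Y \<le> A}" for j
  have Late_sets: "Late j \<in> sets P" for j
  proof -
    have [measurable]: "llr_sum la {1..m} \<in> borel_measurable P" for m
      unfolding P_def using post_change_params_in[OF la] la by (rule llr_sum_measurable_batch)
    show ?thesis
      unfolding Late_def by measurable
  qed
  have sum_le_Wstat: "llr_sum la {1..m} Y \<le> Wstat p (batch T E N) E \<theta> (Lam \<Theta> \<theta> \<epsilon>) m Y"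
    if "1 \<le> m" for m Y
  proof -
    have "llr_sum la {1..m} Y = llr_sum (restrict la {1..E}) {1..m} Y"
      using batch_in_range[OF batches] by (intro sum.cong) auto
    also have "\<dots> \<le> Wstat p (batch T E N) E \<theta> (Lam \<Theta> \<theta> \<epsilon>) m Y"
      using la that by (intro Wstat_ge_sum finite_post_params) auto
    finally show ?thesis .
  qed
  have delay_le: "glr_stop A Y \<le> of_nat (k + 1) + (\<Sum>j. indicator (Late j) Y)" if "Y \<in> space P" for Y
  proof -
    have "glr_stop A Y
        \<le> of_nat (k + 1) + (\<Sum>j. of_bool (Wstat p (batch T E N) E \<theta> (Lam \<Theta> \<theta> \<epsilon>) (k + 1 + j) Y \<le> A))"
      by (rule stop_time_le_suminf) simp
    also have "\<dots> \<le> of_nat (k + 1) + (\<Sum>j. indicator (Late j) Y)"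
    proof (intro add_left_mono suminf_le)
      fix j
      show "of_bool (Wstat p (batch T E N) E \<theta> (Lam \<Theta> \<theta> \<epsilon>) (k + 1 + j) Y \<le> A)
          \<le> (indicator (Late j) Y :: ennreal)"
        using that sum_le_Wstat[of "k + 1 + j" Y] by (auto simp: Late_def)
    qed auto
    finally show ?thesis .
  qed
  have Late_le: "emeasure P (Late j) \<le> ennreal (r ^ j)" for j
  proof -
    have "exp (A / 2) * r ^ (k + 1 + j) = (exp (A / 2) * r ^ k) * r * r ^ j"
      by (simp add: power_add)
    also have "\<dots> \<le> 1 * 1 * r ^ j"
      using r exp_mult_power_ceiling_le_1[OF r, of "A / 2"] unfolding k_def
      by (intro mult_mono) auto
    finally have "ennreal (exp (A / 2) * r ^ (k + 1 + j)) \<le> ennreal (r ^ j)"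
      by (intro ennreal_leI) simp
    moreover have "emeasure P (Late j) \<le> ennreal (exp (A / 2) * r ^ (k + 1 + j))"
      unfolding Late_def P_def using la r bhatt by (intro emeasure_llr_sum_le_post_change) auto
    ultimately show ?thesis
      by (rule order_trans[rotated])
  qed
  have "(\<integral>\<^sup>+ Y. glr_stop A Y \<partial>P) \<le> (\<integral>\<^sup>+ Y. of_nat (k + 1) + (\<Sum>j. indicator (Late j) Y) \<partial>P)"
    by (intro nn_integral_mono delay_le)
  also have "\<dots> = of_nat (k + 1) + (\<Sum>j. emeasure P (Late j))"
    using Late_sets by (simp add: nn_integral_add nn_integral_suminf P.emeasure_space_1)
  also have "\<dots> \<le> of_nat (k + 1) + (\<Sum>j. ennreal (r ^ j))"
    using Late_le by (intro add_left_mono suminf_le) auto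
  also have "\<dots> = of_nat (k + 1) + ennreal (1 / (1 - r))"
    using r by (subst suminf_ennreal_geometric) auto
  also have "\<dots> = ennreal (real (k + 1) + 1 / (1 - r))"
    using r by (simp add: ennreal_of_nat_eq_real_of_nat ennreal_plus[symmetric] del: ennreal_plus)
  also have "\<dots> \<le> ennreal (A / (2 * ln (1 / r)) + 2 + 1 / (1 - r))"
  proof (intro ennreal_leI add_right_mono)
    have "0 \<le> A / (2 * ln (1 / r))"
      using \<open>0 \<le> A\<close> r by simp
    then show "real (k + 1) \<le> A / (2 * ln (1 / r)) + 2"
      unfolding k_def by (simp add: field_simps) linarith
  qed
  finally show ?thesis
    unfolding obs_law_change_at_1 P_def[symmetric] .
qed

lemma uniform_bhattacharyya_bound:
  "\<exists>r. 0 < r \<and> r < 1 \<and> (\<forall>e\<in>{1..E}. \<forall>l\<in>Lam \<Theta> \<theta> \<epsilon> e. bhattacharyya l (\<theta> e) \<le> ennreal r)"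
proof -
  let ?R = "(\<lambda>(e, l). bhattacharyya l (\<theta> e)) ` (SIGMA e:{1..E}. Lam \<Theta> \<theta> \<epsilon> e)"
  have "finite ?R"
    using Lam_finite by (intro finite_imageI finite_SigmaI) auto
  moreover have "bhattacharyya l (\<theta> e) < 1" if "e \<in> {1..E}" "l \<in> Lam \<Theta> \<theta> \<epsilon> e" for e l
    using that Lam_subset Lam_neq baseline_in
    by (intro bhattacharyya_lt_1 law_absolutely_continuous law_neq) auto
  ultimately have "\<exists>r :: real. 0 < r \<and> r < 1 \<and> (\<forall>x\<in>?R. x \<le> ennreal r)"
    by (intro finite_ennreal_less_1_bound) auto
  then show ?thesis
    by auto
qed

text \<open>The summand \<open>\<bar>Sup {}\<bar>\<close> keeps the threshold above the value of \<open>Wstat\<close> when some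
  \<open>Lam \<Theta> \<theta> \<epsilon> e\<close> is empty.\<close>
lemma false_alarm_asymptotic:
  defines "K \<equiv> ln (real (card post_params) + 1) + \<bar>Sup ({} :: real set)\<bar>"
  shows "\<exists>f. (f \<longlongrightarrow> 0) at_top \<and> eventually (\<lambda>\<beta>. ennreal (\<beta> * (1 + f \<beta>)) \<le>
    (\<integral>\<^sup>+ Y. glr_stop (3 * ln \<beta> + K) Y \<partial>obs_law \<mu> p (batch T E N) \<theta> \<theta> None)) at_top"
proof (intro exI conjI)
  show "((\<lambda>\<beta>::real. (1 - 1 / \<beta>)\<^sup>2 - 1) \<longlongrightarrow> 0) at_top"
    by real_asymp
  have "exp (- K) \<le> exp (- ln (real (card post_params) + 1))"
    unfolding K_def by simp
  also have "\<dots> = 1 / (real (card post_params) + 1)"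
    by (simp add: exp_minus inverse_eq_divide)
  finally have "real (card post_params) * exp (- K)
      \<le> real (card post_params) / (real (card post_params) + 1)"
    by (simp add: mult_left_mono divide_inverse)
  also have "\<dots> \<le> 1"
    by simp
  finally have card_K: "real (card post_params) * exp (- K) \<le> 1" .
  show "eventually (\<lambda>\<beta>. ennreal (\<beta> * (1 + ((1 - 1 / \<beta>)\<^sup>2 - 1))) \<le>
    (\<integral>\<^sup>+ Y. glr_stop (3 * ln \<beta> + K) Y \<partial>obs_law \<mu> p (batch T E N) \<theta> \<theta> None)) at_top"
    using eventually_ge_at_top[of "2 :: real"]
  proof (rule eventually_mono)
    fix \<beta> :: real assume "2 \<le> \<beta>"
    then have "0 \<le> ln \<beta>" "1 \<le> nat \<lfloor>\<beta>\<rfloor>"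
      by (auto simp: le_nat_floor)
    moreover have "0 \<le> ln (real (card post_params) + 1)"
      by simp
    ultimately have "Sup {} \<le> 3 * ln \<beta> + K"
      unfolding K_def using abs_ge_self[of "Sup ({} :: real set)"] by linarith
    have "ennreal (\<beta> * (1 + ((1 - 1 / \<beta>)\<^sup>2 - 1))) \<le> ennreal (real (nat \<lfloor>\<beta>\<rfloor>) *
        (1 - real (nat \<lfloor>\<beta>\<rfloor>) ^ 2 * real (card post_params) * exp (- (3 * ln \<beta> + K))))"
      using mult_one_minus_inverse_sq_le_floor[OF \<open>2 \<le> \<beta>\<close> _ card_K] by (intro ennreal_leI) simp
    also have "\<dots> \<le> (\<integral>\<^sup>+ Y. glr_stop (3 * ln \<beta> + K) Y \<partial>obs_law \<mu> p (batch T E N) \<theta> \<theta> None)"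
      by (rule false_alarm_bound) fact+
    finally show "ennreal (\<beta> * (1 + ((1 - 1 / \<beta>)\<^sup>2 - 1))) \<le>
      (\<integral>\<^sup>+ Y. glr_stop (3 * ln \<beta> + K) Y \<partial>obs_law \<mu> p (batch T E N) \<theta> \<theta> None)" .
  qed
qed

lemma detection_delay_asymptotic:
  assumes "0 \<le> K"
  shows "\<exists>C > 0. \<forall>la. (\<forall>e \<in> {1..E}. la e \<in> Lam \<Theta> \<theta> \<epsilon> e) \<longrightarrow>
    (\<exists>g. (g \<longlongrightarrow> 0) at_top \<and> eventually (\<lambda>\<beta>.
      (\<integral>\<^sup>+ Y. glr_stop (3 * ln \<beta> + K) Y \<partial>obs_law \<mu> p (batch T E N) \<theta> la (Some 1))
        \<le> ennreal (C * ln \<beta> * (1 + g \<beta>))) at_top)"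
proof -
  obtain r where r: "0 < r" "r < 1"
    and bhatt: "\<forall>e\<in>{1..E}. \<forall>l\<in>Lam \<Theta> \<theta> \<epsilon> e. bhattacharyya l (\<theta> e) \<le> ennreal r"
    using uniform_bhattacharyya_bound by blast
  define c where "c = 2 * ln (1 / r)"
  define Q where "Q = K / c + 2 + 1 / (1 - r)"
  have "0 < c"
    using r by (simp add: c_def)
  have "\<exists>g. (g \<longlongrightarrow> 0) at_top \<and> eventually (\<lambda>\<beta>.
      (\<integral>\<^sup>+ Y. glr_stop (3 * ln \<beta> + K) Y \<partial>obs_law \<mu> p (batch T E N) \<theta> la (Some 1))
        \<le> ennreal (3 / c * ln \<beta> * (1 + g \<beta>))) at_top"
    if la: "\<forall>e \<in> {1..E}. la e \<in> Lam \<Theta> \<theta> \<epsilon> e" for la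
  proof (intro exI conjI)
    show "((\<lambda>\<beta>::real. Q * c / 3 / ln \<beta>) \<longlongrightarrow> 0) at_top"
      by real_asymp
    show "eventually (\<lambda>\<beta>.
      (\<integral>\<^sup>+ Y. glr_stop (3 * ln \<beta> + K) Y \<partial>obs_law \<mu> p (batch T E N) \<theta> la (Some 1))
        \<le> ennreal (3 / c * ln \<beta> * (1 + Q * c / 3 / ln \<beta>))) at_top"
      using eventually_gt_at_top[of "1 :: real"]
    proof (rule eventually_mono)
      fix \<beta> :: real assume "1 < \<beta>"
      then have "0 < ln \<beta>"
        by simp
      have "(\<integral>\<^sup>+ Y. glr_stop (3 * ln \<beta> + K) Y \<partial>obs_law \<mu> p (batch T E N) \<theta> la (Some 1))
          \<le> ennreal ((3 * ln \<beta> + K) / (2 * ln (1 / r)) + 2 + 1 / (1 - r))"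
        using \<open>0 < ln \<beta>\<close> assms by (intro detection_delay_bound[OF la r bhatt]) simp
      also have "(3 * ln \<beta> + K) / (2 * ln (1 / r)) + 2 + 1 / (1 - r)
          = 3 / c * ln \<beta> * (1 + Q * c / 3 / ln \<beta>)"
        using \<open>0 < c\<close> \<open>0 < ln \<beta>\<close> by (simp add: Q_def c_def field_simps)
      finally show "(\<integral>\<^sup>+ Y. glr_stop (3 * ln \<beta> + K) Y \<partial>obs_law \<mu> p (batch T E N) \<theta> la (Some 1))
        \<le> ennreal (3 / c * ln \<beta> * (1 + Q * c / 3 / ln \<beta>))" .
    qed
  qed
  then show ?thesis
    using \<open>0 < c\<close> by (intro exI[of _ "3 / c"]) auto
qed

end

theorem theorem2:
  fixes \<mu> :: "'a measure" and p :: "real \<Rightarrow> 'a \<Rightarrow> real" and \<Theta> :: "real set"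
    and T E :: nat and N :: "nat \<Rightarrow> nat" and \<theta> :: "nat \<Rightarrow> real" and \<epsilon> :: real
  assumes dens_meas: "\<And>t. t \<in> \<Theta> \<Longrightarrow> p t \<in> borel_measurable \<mu>"
    and dens_nonneg: "\<And>t y. t \<in> \<Theta> \<Longrightarrow> y \<in> space \<mu> \<Longrightarrow> p t y \<ge> 0"
    and dens_prob: "\<And>t. t \<in> \<Theta> \<Longrightarrow> prob_space (density \<mu> (\<lambda>y. ennreal (p t y)))"
    and KL_fin_pos: "\<And>t s. t \<in> \<Theta> \<Longrightarrow> s \<in> \<Theta> \<Longrightarrow> t \<noteq> s \<Longrightarrow>
        KL_finite (density \<mu> (\<lambda>y. ennreal (p t y))) (density \<mu> (\<lambda>y. ennreal (p s y)))
        \<and> KL (density \<mu> (\<lambda>y. ennreal (p t y))) (density \<mu> (\<lambda>y. ennreal (p s y))) > 0"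
    and batches: "batches_ok T E N"
    and theta_in: "\<And>e. e \<in> {1..E} \<Longrightarrow> \<theta> e \<in> \<Theta>"
    and eps_pos: "\<epsilon> > 0"
    and Lam_finite: "\<And>e. e \<in> {1..E} \<Longrightarrow> finite (Lam \<Theta> \<theta> \<epsilon> e)"
  shows "\<exists>A :: real \<Rightarrow> real. A \<in> O(ln) \<and> eventually (\<lambda>\<beta>. A \<beta> > 0) at_top \<and>
     (\<exists>f :: real \<Rightarrow> real. (f \<longlongrightarrow> 0) at_top \<and>
        eventually (\<lambda>\<beta>. ennreal (\<beta> * (1 + f \<beta>)) \<le>
          (\<integral>\<^sup>+ Y. stop_time (\<lambda>n. Wstat p (batch T E N) E \<theta> (Lam \<Theta> \<theta> \<epsilon>) n) (A \<beta>) Y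
             \<partial>obs_law \<mu> p (batch T E N) \<theta> \<theta> None)) at_top) \<and>
     (\<exists>C > 0. \<forall>la. (\<forall>e \<in> {1..E}. la e \<in> Lam \<Theta> \<theta> \<epsilon> e) \<longrightarrow>
        (\<exists>g :: real \<Rightarrow> real. (g \<longlongrightarrow> 0) at_top \<and>
          eventually (\<lambda>\<beta>.
            (\<integral>\<^sup>+ Y. stop_time (\<lambda>n. Wstat p (batch T E N) E \<theta> (Lam \<Theta> \<theta> \<epsilon>) n) (A \<beta>) Y
               \<partial>obs_law \<mu> p (batch T E N) \<theta> la (Some 1))
            \<le> ennreal (C * ln \<beta> * (1 + g \<beta>))) at_top))"
proof -
  interpret all_batch_change \<mu> p \<Theta> T E N \<theta> \<epsilon>
    using assms by (simp add: all_batch_change_def all_batch_change_axioms_def density_family_def)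
  define K where "K = ln (real (card post_params) + 1) + \<bar>Sup ({} :: real set)\<bar>"
  have "0 \<le> K"
    unfolding K_def by simp
  show ?thesis
  proof (rule exI[of _ "\<lambda>\<beta>. 3 * ln \<beta> + K"], intro conjI)
    show "(\<lambda>\<beta>. 3 * ln \<beta> + K) \<in> O(ln)"
      by (rule threshold_bigo)
    show "eventually (\<lambda>\<beta>. 0 < 3 * ln \<beta> + K) at_top"
    proof (rule eventually_mono[OF eventually_gt_at_top[of 1]])
      show "0 < 3 * ln \<beta> + K" if "1 < \<beta>" for \<beta> :: real
        using ln_gt_zero[OF that] \<open>0 \<le> K\<close> by linarith
    qed
    show "\<exists>f. (f \<longlongrightarrow> 0) at_top \<and> eventually (\<lambda>\<beta>. ennreal (\<beta> * (1 + f \<beta>)) \<le>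
        (\<integral>\<^sup>+ Y. glr_stop (3 * ln \<beta> + K) Y \<partial>obs_law \<mu> p (batch T E N) \<theta> \<theta> None)) at_top"
      unfolding K_def by (rule false_alarm_asymptotic)
    show "\<exists>C > 0. \<forall>la. (\<forall>e \<in> {1..E}. la e \<in> Lam \<Theta> \<theta> \<epsilon> e) \<longrightarrow>
        (\<exists>g. (g \<longlongrightarrow> 0) at_top \<and> eventually (\<lambda>\<beta>.
          (\<integral>\<^sup>+ Y. glr_stop (3 * ln \<beta> + K) Y \<partial>obs_law \<mu> p (batch T E N) \<theta> la (Some 1))
            \<le> ennreal (C * ln \<beta> * (1 + g \<beta>))) at_top)"
      using \<open>0 \<le> K\<close> by (rule detection_delay_asymptotic)
  qed
qed

end
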